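(* For all $t\ge1$ and all $\mathbf{x}\in\mathcal{X}$, \[ |\sigma_{\mathrm{fb}[t]}(\mathbf{x})-\widetilde\sigma_{\mathrm{fb}[t]}(\mathbf{x})|\le\sqrt{(L+1)\varepsilon\Big(1+\frac{4\hat K_0^2t^2}{\sigma^4}\Big)}. \]
   Context: $\mathcal{X}$ is a finite subset of the unit ball of $\mathbb{R}^d$. $k$ is a kernel (the exact NTK) with $k(\mathbf{x},\mathbf{x}')\le K_0$ for all $\mathbf{x},\mathbf{x}'$, and $\widetilde k(\mathbf{x},\mathbf{x}')=\langle\nabla_\theta f(\mathbf{x};\theta_0),\nabla_\theta f(\mathbf{x}';\theta_0)\rangle$ is the empirical NTK of a network with $L+1$ layers at initialization $\theta_0$. It is assumed that $|\widetilde k(\mathbf{x},\mathbf{x}')-k(\mathbf{x},\mathbf{x}')|\le(L+1)\varepsilon$ for all $\mathbf{x},\mathbf{x}'\in\mathcal{X}$, that $(L+1)\varepsilon\le1$ and that $\sigma^2\le1$; $\hat K_0=\max\{1,K_0\}$. Queries $\mathbf{x}_1,\mathbf{x}_2,\dots$ are indexed sequentially and $\mathrm{fb}[t]\le t-1$ is the number of observed queries when $\mathbf{x}_t$ is chosen. $\sigma^2_{\mathrm{fb}[t]}(\mathbf{x})=k(\mathbf{x},\mathbf{x})-\mathbf{k}_t(\mathbf{x})^\top(\mathbf{K}_t+\sigma^2I)^{-1}\mathbf{k}_t(\mathbf{x})$ with $\mathbf{k}_t(\mathbf{x})=(k(\mathbf{x},\mathbf{x}_\tau))_{\tau\le\mathrm{fb}[t]}$,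 $\mathbf{K}_t=(k(\mathbf{x}_\tau,\mathbf{x}_{\tau'}))_{\tau,\tau'\le\mathrm{fb}[t]}$; $\widetilde\sigma^2_{\mathrm{fb}[t]}$ is defined identically with $\widetilde k$ in place of $k$. *)

theory Defs
  imports "HOL-Analysis.Analysis" "Jordan_Normal_Form.Gauss_Jordan_Elimination"
begin

definition is_kernel_on :: "'a set \<Rightarrow> ('a \<Rightarrow> 'a \<Rightarrow> real) \<Rightarrow> bool" where
  "is_kernel_on X k \<longleftrightarrow>
     (\<forall>x\<in>X. \<forall>y\<in>X. k x y = k y x) \<and>
     (\<forall>n (z::nat \<Rightarrow> 'a) (c::nat \<Rightarrow> real). (\<forall>i<n. z i \<in> X) \<longrightarrow>
        0 \<le> (\<Sum>i<n. \<Sum>j<n. c i * c j * k (z i) (z j)))"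

text \<open>Gram matrix K_t of the first n observed queries xs 1, ..., xs n
  (row/column index i corresponds to query xs (i+1)).\<close>
definition gram_mat :: "('a \<Rightarrow> 'a \<Rightarrow> real) \<Rightarrow> (nat \<Rightarrow> 'a) \<Rightarrow> nat \<Rightarrow> real mat" where
  "gram_mat k xs n = mat n n (\<lambda>(i,j). k (xs (Suc i)) (xs (Suc j)))"

definition kern_vec :: "('a \<Rightarrow> 'a \<Rightarrow> real) \<Rightarrow> (nat \<Rightarrow> 'a) \<Rightarrow> nat \<Rightarrow> 'a \<Rightarrow> real vec" where
  "kern_vec k xs n x = vec n (\<lambda>i. k x (xs (Suc i)))"

text \<open>Posterior variance sigma^2_n(x) = k(x,x) - k_n(x)^T (K_n + s2 I)^{-1} k_n(x),
  where n = fb[t] is the number of observed queries.\<close>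
definition post_var :: "('a \<Rightarrow> 'a \<Rightarrow> real) \<Rightarrow> (nat \<Rightarrow> 'a) \<Rightarrow> nat \<Rightarrow> real \<Rightarrow> 'a \<Rightarrow> real" where
  "post_var k xs n s2 x =
     k x x - kern_vec k xs n x \<bullet>
       (the (mat_inverse (gram_mat k xs n + s2 \<cdot>\<^sub>m 1\<^sub>m n)) *\<^sub>v kern_vec k xs n x)"

definition post_sd :: "('a \<Rightarrow> 'a \<Rightarrow> real) \<Rightarrow> (nat \<Rightarrow> 'a) \<Rightarrow> nat \<Rightarrow> real \<Rightarrow> 'a \<Rightarrow> real" where
  "post_sd k xs n s2 x = sqrt (post_var k xs n s2 x)"

end

(* Posterior variances are minima of regularised least-squares objectives:
     sigma^2_n(x) = min_d Q_k(d),
     Q_k(d) = k(x,x) - 2 sum_i d_i k(x,x_i) + sum_ij d_i d_j k(x_i,x_j) + s2 |d|^2.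
   If |k - kt| <= delta then Q_k(d) <= Q_kt(d) + delta (1 + |d|_1)^2, so evaluating at the
   minimiser d of Q_kt gives sigma^2_n(x) <= sigma~^2_n(x) + delta (1 + |d|_1)^2, and symmetrically.
   Minimisers are small: s2 |d|_2^2 <= <d, k_n(x)> <= |d|_1 max|k| and |d|_1^2 <= n |d|_2^2 give
   |d|_1 <= n max|k| / s2, where n < t.  Finally |sqrt a - sqrt b| <= sqrt |a - b|. *)
theory Submission
  imports Defs "Jordan_Normal_Form.Determinant"
begin

unbundle no vec_syntax

lemma is_kernel_on_inner:
  fixes f :: "'a \<Rightarrow> 'b::real_inner"
  shows "is_kernel_on S (\<lambda>y z. inner (f y) (f z))"
  unfolding is_kernel_on_def
proof (intro conjI allI impI ballI)
  fix y z show "inner (f y) (f z) = inner (f z) (f y)" by (rule inner_commute)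
next
  fix n and z :: "nat \<Rightarrow> 'a" and c :: "nat \<Rightarrow> real"
  have "(\<Sum>i<n. \<Sum>j<n. c i * c j * inner (f (z i)) (f (z j)))
      = inner (\<Sum>i<n. c i *\<^sub>R f (z i)) (\<Sum>j<n. c j *\<^sub>R f (z j))"
    by (simp add: inner_sum_left inner_sum_right sum_distrib_left mult.assoc)
      (subst sum.swap, simp add: inner_commute mult.left_commute)
  then show "0 \<le> (\<Sum>i<n. \<Sum>j<n. c i * c j * inner (f (z i)) (f (z j)))" by simp
qed

lemma kernel_gram_psd:
  assumes "is_kernel_on S k" "\<forall>i<n. xs (Suc i) \<in> S"
  shows "0 \<le> (\<Sum>i<n. \<Sum>j<n. e i * e j * k (xs (Suc i)) (xs (Suc j)))"
  using assms(1)[unfolded is_kernel_on_def, THEN conjunct2, rule_format, of n "\<lambda>i. xs (Suc i)" e] assms(2)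
  by simp

lemma kernel_abs_le:
  assumes "is_kernel_on S k" "a \<in> S" "b \<in> S" "k a a \<le> M" "k b b \<le> M"
  shows "\<bar>k a b\<bar> \<le> M"
proof -
  define z where "z i = (if i = 0 then a else b)" for i :: nat
  have "k b a = k a b" using assms(1-3) unfolding is_kernel_on_def by auto
  moreover have psd: "0 \<le> (\<Sum>i<2. \<Sum>j<2. c i * c j * k (z i) (z j))" for c
    using assms(1-3) unfolding is_kernel_on_def z_def by auto
  ultimately have "0 \<le> k a a + 2 * s * k a b + s * s * k b b" for s
    using psd[of "\<lambda>i. if i = 0 then 1 else s"] by (simp add: numeral_2_eq_2 z_def algebra_simps)
  from this[of 1] this[of "-1"] assms(4,5) show ?thesis by auto
qed

text \<open>\<open>solves_reg_gram k xs n s2 c r\<close> says \<open>(K\<^sub>n + s2 I) c = r\<close> for the Gram matrix \<open>K\<^sub>n\<close>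
  of \<open>xs 1, \<dots>, xs n\<close>; as in \<open>gram_mat\<close>, index \<open>i\<close> refers to the point \<open>xs (Suc i)\<close>.\<close>
definition solves_reg_gram ::
    "('a \<Rightarrow> 'a \<Rightarrow> real) \<Rightarrow> (nat \<Rightarrow> 'a) \<Rightarrow> nat \<Rightarrow> real \<Rightarrow> (nat \<Rightarrow> real) \<Rightarrow> (nat \<Rightarrow> real) \<Rightarrow> bool" where
  "solves_reg_gram k xs n s2 c r \<longleftrightarrow>
     (\<forall>i<n. (\<Sum>j<n. k (xs (Suc i)) (xs (Suc j)) * c j) + s2 * c i = r i)"

text \<open>For a kernel with feature map \<open>\<phi>\<close>, \<open>ridge_objective k xs n s2 x d\<close> equals
  \<open>\<parallel>\<phi> x - (\<Sum>i<n. d i *\<^sub>R \<phi> (xs (Suc i)))\<parallel>\<^sup>2 + s2 * \<parallel>d\<parallel>\<^sup>2\<close>.\<close>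
definition ridge_objective ::
    "('a \<Rightarrow> 'a \<Rightarrow> real) \<Rightarrow> (nat \<Rightarrow> 'a) \<Rightarrow> nat \<Rightarrow> real \<Rightarrow> 'a \<Rightarrow> (nat \<Rightarrow> real) \<Rightarrow> real" where
  "ridge_objective k xs n s2 x d =
     k x x - 2 * (\<Sum>i<n. d i * k x (xs (Suc i)))
     + (\<Sum>i<n. \<Sum>j<n. d i * d j * k (xs (Suc i)) (xs (Suc j))) + s2 * (\<Sum>i<n. (d i)\<^sup>2)"

lemma solves_reg_gram_inner:
  assumes "solves_reg_gram k xs n s2 c r"
  shows "(\<Sum>i<n. d i * r i) =
    (\<Sum>i<n. \<Sum>j<n. d i * c j * k (xs (Suc i)) (xs (Suc j))) + s2 * (\<Sum>i<n. d i * c i)"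
proof -
  have "(\<Sum>i<n. d i * r i) = (\<Sum>i<n. d i * ((\<Sum>j<n. k (xs (Suc i)) (xs (Suc j)) * c j) + s2 * c i))"
    using assms unfolding solves_reg_gram_def by simp
  then show ?thesis by (simp add: distrib_left sum.distrib sum_distrib_left ac_simps)
qed

lemma ridge_objective_nonneg:
  assumes "is_kernel_on S k" "x \<in> S" "\<forall>i<n. xs (Suc i) \<in> S" "0 \<le> s2"
  shows "0 \<le> ridge_objective k xs n s2 x d"
proof -
  have sym: "k (xs (Suc i)) x = k x (xs (Suc i))" if "i < n" for i
    using assms(1-3) that unfolding is_kernel_on_def by auto
  define z where "z i = (if i = 0 then x else xs i)" for i
  define c where "c i = (if i = 0 then 1 else - d (i - 1))" for i
  have "\<forall>i<Suc n. z i \<in> S" using assms(2,3) unfolding z_def by (auto simp: less_Suc_eq_0_disj)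
  then have "0 \<le> (\<Sum>i<Suc n. \<Sum>j<Suc n. c i * c j * k (z i) (z j))"
    using assms(1) unfolding is_kernel_on_def by blast
  also have "\<dots> = k x x - 2 * (\<Sum>i<n. d i * k x (xs (Suc i)))
      + (\<Sum>i<n. \<Sum>j<n. d i * d j * k (xs (Suc i)) (xs (Suc j)))"
    unfolding sum.lessThan_Suc_shift
    by (simp add: z_def c_def sum.distrib sum_negf sum_subtractf algebra_simps)
      (auto intro!: sum.cong simp: sym)
  finally show ?thesis
    unfolding ridge_objective_def using assms(4) by (simp add: sum_nonneg)
qed

lemma ridge_objective_solution:
  assumes "solves_reg_gram k xs n s2 c (\<lambda>i. k x (xs (Suc i)))"
  shows "ridge_objective k xs n s2 x c = k x x - (\<Sum>i<n. c i * k x (xs (Suc i)))"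
  using solves_reg_gram_inner[OF assms, of c]
  unfolding ridge_objective_def by (simp add: power2_eq_square)

text \<open>Expanding around the solution \<open>c\<close>, the objective at \<open>d\<close> exceeds the one at \<open>c\<close> by the
  nonnegative quadratic form of \<open>K\<^sub>n + s2 I\<close> evaluated at \<open>d - c\<close>.\<close>
lemma ridge_objective_solution_le:
  assumes "is_kernel_on S k" "\<forall>i<n. xs (Suc i) \<in> S" "0 \<le> s2"
    and "solves_reg_gram k xs n s2 c (\<lambda>i. k x (xs (Suc i)))"
  shows "ridge_objective k xs n s2 x c \<le> ridge_objective k xs n s2 x d"
proof -
  let ?K = "\<lambda>i j. k (xs (Suc i)) (xs (Suc j))"
  define e where "e i = d i - c i" for i
  have swap: "(\<Sum>i<n. \<Sum>j<n. c i * d j * ?K i j) = (\<Sum>i<n. \<Sum>j<n. d i * c j * ?K i j)"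
    using assms(1,2) unfolding is_kernel_on_def
    by (subst sum.swap) (auto intro!: sum.cong simp: mult.commute)
  have "(\<Sum>i<n. \<Sum>j<n. e i * e j * ?K i j) =
      (\<Sum>i<n. \<Sum>j<n. d i * d j * ?K i j) - (\<Sum>i<n. \<Sum>j<n. d i * c j * ?K i j)
      - (\<Sum>i<n. \<Sum>j<n. c i * d j * ?K i j) + (\<Sum>i<n. \<Sum>j<n. c i * c j * ?K i j)"
    unfolding e_def by (simp add: algebra_simps sum.distrib sum_subtractf)
  moreover have "s2 * (\<Sum>i<n. (e i)\<^sup>2) =
      s2 * (\<Sum>i<n. (d i)\<^sup>2) - 2 * s2 * (\<Sum>i<n. d i * c i) + s2 * (\<Sum>i<n. c i * c i)"
  proof -
    have "(\<Sum>i<n. (e i)\<^sup>2) = (\<Sum>i<n. (d i)\<^sup>2) - 2 * (\<Sum>i<n. d i * c i) + (\<Sum>i<n. c i * c i)"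
      unfolding e_def
      by (simp add: power2_eq_square algebra_simps sum.distrib sum_subtractf sum_distrib_left)
    then show ?thesis by (simp add: right_diff_distrib distrib_left)
  qed
  moreover have "0 \<le> (\<Sum>i<n. \<Sum>j<n. e i * e j * ?K i j) + s2 * (\<Sum>i<n. (e i)\<^sup>2)"
    using kernel_gram_psd[OF assms(1,2), of e] assms(3) by (simp add: sum_nonneg)
  ultimately show ?thesis
    using solves_reg_gram_inner[OF assms(4), of d] solves_reg_gram_inner[OF assms(4), of c] swap
    unfolding ridge_objective_def by (simp add: algebra_simps power2_eq_square)
qed

lemma ridge_objective_diff_le:
  assumes "\<forall>y\<in>S. \<forall>z\<in>S. \<bar>k1 y z - k2 y z\<bar> \<le> \<delta>" "x \<in> S" "\<forall>i<n. xs (Suc i) \<in> S"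
  shows "ridge_objective k1 xs n s2 x d - ridge_objective k2 xs n s2 x d \<le> \<delta> * (1 + (\<Sum>i<n. \<bar>d i\<bar>))\<^sup>2"
proof -
  let ?D = "\<lambda>y z. k1 y z - k2 y z"
  let ?l1 = "\<Sum>i<n. \<bar>d i\<bar>"
  have diag: "?D x x \<le> \<delta>" using assms(1,2) by fastforce
  have "\<bar>\<Sum>i<n. d i * ?D x (xs (Suc i))\<bar> \<le> (\<Sum>i<n. \<bar>d i\<bar> * \<delta>)"
    using assms by (intro sum_abs[THEN order_trans] sum_mono) (auto simp: abs_mult intro: mult_left_mono)
  then have linear: "- 2 * (\<Sum>i<n. d i * ?D x (xs (Suc i))) \<le> 2 * (\<delta> * ?l1)"
    unfolding sum_distrib_right[symmetric] by (simp add: mult.commute)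
  have "(\<Sum>i<n. \<Sum>j<n. d i * d j * ?D (xs (Suc i)) (xs (Suc j)))
      \<le> (\<Sum>i<n. \<Sum>j<n. \<bar>d i\<bar> * \<bar>d j\<bar> * \<delta>)"
  proof (intro sum_mono)
    fix i j assume "i \<in> {..<n}" "j \<in> {..<n}"
    then have "\<bar>d i * d j * ?D (xs (Suc i)) (xs (Suc j))\<bar> \<le> \<bar>d i\<bar> * \<bar>d j\<bar> * \<delta>"
      using assms(1,3) by (auto simp: abs_mult intro: mult_left_mono)
    then show "d i * d j * ?D (xs (Suc i)) (xs (Suc j)) \<le> \<bar>d i\<bar> * \<bar>d j\<bar> * \<delta>" by linarith
  qed
  also have "\<dots> = \<delta> * ?l1\<^sup>2"
    by (simp only: power2_eq_square sum_product) (simp add: sum_distrib_left mult_ac)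
  finally have quadratic: "(\<Sum>i<n. \<Sum>j<n. d i * d j * ?D (xs (Suc i)) (xs (Suc j))) \<le> \<delta> * ?l1\<^sup>2" .
  have "ridge_objective k1 xs n s2 x d - ridge_objective k2 xs n s2 x d =
      ?D x x - 2 * (\<Sum>i<n. d i * ?D x (xs (Suc i)))
      + (\<Sum>i<n. \<Sum>j<n. d i * d j * ?D (xs (Suc i)) (xs (Suc j)))"
    unfolding ridge_objective_def right_diff_distrib sum_subtractf by linarith
  also have "\<dots> \<le> \<delta> + 2 * (\<delta> * ?l1) + \<delta> * ?l1\<^sup>2"
    using diag linear quadratic by linarith
  also have "\<dots> = \<delta> * (1 + ?l1)\<^sup>2" by (simp add: power2_eq_square algebra_simps)
  finally show ?thesis .
qed

lemma solves_reg_gram_l1_le: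
  assumes "is_kernel_on S k" "\<forall>i<n. xs (Suc i) \<in> S" "0 < s2"
    and "solves_reg_gram k xs n s2 c r" "\<forall>i<n. \<bar>r i\<bar> \<le> B"
  shows "(\<Sum>i<n. \<bar>c i\<bar>) \<le> real n * B / s2"
proof -
  define S where "S = (\<Sum>i<n. \<bar>c i\<bar>)"
  have S0: "0 \<le> S" unfolding S_def by (simp add: sum_nonneg)
  have "s2 * (\<Sum>i<n. (c i)\<^sup>2) \<le> (\<Sum>i<n. c i * r i)"
    using solves_reg_gram_inner[OF assms(4), of c] kernel_gram_psd[OF assms(1,2), of c]
    by (simp add: power2_eq_square)
  also have "\<dots> \<le> S * B"
    unfolding S_def sum_distrib_right
  proof (rule sum_mono)
    fix i assume "i \<in> {..<n}"
    then have "\<bar>c i\<bar> * \<bar>r i\<bar> \<le> \<bar>c i\<bar> * B" using assms(5) by (simp add: mult_left_mono)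
    then show "c i * r i \<le> \<bar>c i\<bar> * B" using abs_ge_self[of "c i * r i"] by (simp add: abs_mult)
  qed
  finally have quad: "s2 * (\<Sum>i<n. (c i)\<^sup>2) \<le> S * B" .
  have "S\<^sup>2 \<le> real n * (\<Sum>i<n. (c i)\<^sup>2)"
    using sum_squared_le_sum_of_squares[of "\<lambda>i. \<bar>c i\<bar>" "{..<n}"] unfolding S_def
    by (simp add: mult.commute)
  then have "s2 * S\<^sup>2 \<le> real n * (s2 * (\<Sum>i<n. (c i)\<^sup>2))"
    using mult_left_mono[of "S\<^sup>2" _ s2] assms(3) by (simp add: mult.left_commute)
  also have "\<dots> \<le> real n * (S * B)"
    using quad by (simp add: mult_left_mono)
  finally have "S * (s2 * S) \<le> S * (real n * B)" by (simp add: power2_eq_square mult_ac)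
  moreover have "0 \<le> real n * B"
  proof (cases "n = 0")
    case False
    then have "\<bar>r 0\<bar> \<le> B" using assms(5) by simp
    then show ?thesis by simp
  qed simp
  ultimately have "s2 * S \<le> real n * B"
    using S0 by (cases "S = 0") (simp_all add: mult_le_cancel_left_pos)
  then show ?thesis using assms(3) unfolding S_def by (simp add: pos_le_divide_eq mult.commute)
qed

lemma reg_gram_carrier: "gram_mat k xs n + s2 \<cdot>\<^sub>m 1\<^sub>m n \<in> carrier_mat n n"
  unfolding gram_mat_def by simp

lemma reg_gram_mult_vec_index:
  assumes "i < n" "v \<in> carrier_vec n"
  shows "((gram_mat k xs n + s2 \<cdot>\<^sub>m 1\<^sub>m n) *\<^sub>v v) $ i =
    (\<Sum>j<n. k (xs (Suc i)) (xs (Suc j)) * v $ j) + s2 * v $ i"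
proof -
  let ?A = "gram_mat k xs n + s2 \<cdot>\<^sub>m 1\<^sub>m n"
  have "(?A *\<^sub>v v) $ i = (\<Sum>j<n. ?A $$ (i, j) * v $ j)"
    using assms reg_gram_carrier[of k xs n s2]
    by (auto simp: scalar_prod_def lessThan_atLeast0 intro!: sum.cong)
  also have "\<dots> = (\<Sum>j<n. (k (xs (Suc i)) (xs (Suc j)) + (if i = j then s2 else 0)) * v $ j)"
    using assms(1) unfolding gram_mat_def by (intro sum.cong) auto
  also have "\<dots> = (\<Sum>j<n. k (xs (Suc i)) (xs (Suc j)) * v $ j + (if j = i then s2 * v $ j else 0))"
    by (intro sum.cong) (auto simp: distrib_right)
  also have "\<dots> = (\<Sum>j<n. k (xs (Suc i)) (xs (Suc j)) * v $ j) + s2 * v $ i"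
    using assms(1) by (simp add: sum.distrib)
  finally show ?thesis .
qed

lemma solves_reg_gram_iff_mult_vec:
  "solves_reg_gram k xs n s2 (\<lambda>i. v $ i) r \<longleftrightarrow> (gram_mat k xs n + s2 \<cdot>\<^sub>m 1\<^sub>m n) *\<^sub>v v = vec n r"
  if "v \<in> carrier_vec n"
  using that unfolding solves_reg_gram_def
  by (auto simp: reg_gram_mult_vec_index vec_eq_iff reg_gram_carrier simp del: index_mult_mat_vec)

lemma reg_gram_invertible:
  assumes "is_kernel_on S k" "\<forall>i<n. xs (Suc i) \<in> S" "0 < s2"
  obtains B where "mat_inverse (gram_mat k xs n + s2 \<cdot>\<^sub>m 1\<^sub>m n) = Some B"
proof -
  let ?A = "gram_mat k xs n + s2 \<cdot>\<^sub>m 1\<^sub>m n"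
  have A: "?A \<in> carrier_mat n n" by (rule reg_gram_carrier)
  have "det ?A \<noteq> 0"
  proof
    assume "det ?A = 0"
    then obtain v where v: "v \<in> carrier_vec n" "v \<noteq> 0\<^sub>v n" "?A *\<^sub>v v = 0\<^sub>v n"
      using det_0_iff_vec_prod_zero_field[OF A] by blast
    then have "solves_reg_gram k xs n s2 (\<lambda>i. v $ i) (\<lambda>_. 0)"
      by (simp add: solves_reg_gram_iff_mult_vec zero_vec_def)
    from solves_reg_gram_inner[OF this, of "\<lambda>i. v $ i"]
    have "s2 * (\<Sum>i<n. (v $ i)\<^sup>2) \<le> 0"
      using kernel_gram_psd[OF assms(1,2), of "\<lambda>i. v $ i"] by (simp add: power2_eq_square)
    then have "(\<Sum>i<n. (v $ i)\<^sup>2) = 0"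
      using assms(3) by (simp add: mult_le_0_iff sum_nonneg order_antisym)
    then have "v = 0\<^sub>v n" using v(1) by (intro eq_vecI) (auto simp: sum_nonneg_eq_0_iff)
    with v(2) show False by simp
  qed
  then have "?A \<in> Units (ring_mat TYPE(real) n ())" by (rule det_non_zero_imp_unit[OF A])
  then have "mat_inverse ?A \<noteq> None" using mat_inverse(1)[OF A, where b = "()"] by blast
  then show ?thesis using that by blast
qed

lemma post_var_eq_ridge_objective:
  assumes "is_kernel_on S k" "\<forall>i<n. xs (Suc i) \<in> S" "0 < s2"
  obtains c where "solves_reg_gram k xs n s2 c (\<lambda>i. k x (xs (Suc i)))"
    and "post_var k xs n s2 x = ridge_objective k xs n s2 x c"
proof -
  let ?A = "gram_mat k xs n + s2 \<cdot>\<^sub>m 1\<^sub>m n"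
  let ?kv = "kern_vec k xs n x"
  have A: "?A \<in> carrier_mat n n" by (rule reg_gram_carrier)
  obtain B where B: "mat_inverse ?A = Some B" using reg_gram_invertible[OF assms] .
  have B_inv: "?A * B = 1\<^sub>m n" "B \<in> carrier_mat n n" using mat_inverse(2)[OF A B] by auto
  have kv: "?kv \<in> carrier_vec n" unfolding kern_vec_def by simp
  define v where "v = B *\<^sub>v ?kv"
  have v: "v \<in> carrier_vec n" unfolding v_def using B_inv kv by auto
  have "?A *\<^sub>v v = ?kv"
    unfolding v_def using assoc_mult_mat_vec[OF A B_inv(2) kv] B_inv kv by simp
  then have sol: "solves_reg_gram k xs n s2 (\<lambda>i. v $ i) (\<lambda>i. k x (xs (Suc i)))"
    using v by (simp add: solves_reg_gram_iff_mult_vec kern_vec_def)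
  have "post_var k xs n s2 x = k x x - (\<Sum>i<n. v $ i * k x (xs (Suc i)))"
    unfolding post_var_def B option.sel v_def[symmetric]
    using v unfolding scalar_prod_def kern_vec_def by (auto simp: lessThan_atLeast0 mult.commute)
  with sol show ?thesis using that ridge_objective_solution[OF sol] by simp
qed

lemma post_var_nonneg:
  assumes "is_kernel_on S k" "x \<in> S" "\<forall>i<n. xs (Suc i) \<in> S" "0 < s2"
  shows "0 \<le> post_var k xs n s2 x"
  using post_var_eq_ridge_objective[OF assms(1,3,4)] ridge_objective_nonneg[OF assms(1-3)] assms(4)
  by (metis less_imp_le)

lemma abs_sqrt_diff_le:
  assumes "0 \<le> a" "0 \<le> b"
  shows "\<bar>sqrt a - sqrt b\<bar> \<le> sqrt \<bar>a - b\<bar>"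
proof -
  have *: "sqrt p \<le> sqrt q + sqrt (p - q)" if "0 \<le> q" "q \<le> p" for p q :: real
    using sqrt_add_le_add_sqrt[of q "p - q"] that by simp
  show ?thesis using *[of b a] *[of a b] assms by (cases "b \<le> a") (auto simp: abs_if)
qed

lemma post_var_diff_le:
  assumes "is_kernel_on S k1" "is_kernel_on S k2" "x \<in> S" "\<forall>i<n. xs (Suc i) \<in> S" "0 < s2"
    and "\<forall>y\<in>S. \<forall>z\<in>S. \<bar>k1 y z - k2 y z\<bar> \<le> \<delta>" "\<forall>y\<in>S. k2 y y \<le> M"
  shows "post_var k1 xs n s2 x - post_var k2 xs n s2 x \<le> \<delta> * (1 + real n * M / s2)\<^sup>2"
proof -
  obtain c1 where c1: "solves_reg_gram k1 xs n s2 c1 (\<lambda>i. k1 x (xs (Suc i)))"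
      and pv1: "post_var k1 xs n s2 x = ridge_objective k1 xs n s2 x c1"
    using post_var_eq_ridge_objective[OF assms(1,4,5)] .
  obtain c2 where c2: "solves_reg_gram k2 xs n s2 c2 (\<lambda>i. k2 x (xs (Suc i)))"
      and pv2: "post_var k2 xs n s2 x = ridge_objective k2 xs n s2 x c2"
    using post_var_eq_ridge_objective[OF assms(2,4,5)] .
  have "\<forall>i<n. \<bar>k2 x (xs (Suc i))\<bar> \<le> M"
    using kernel_abs_le[OF assms(2,3)] assms(3,4,7) by blast
  then have "(\<Sum>i<n. \<bar>c2 i\<bar>) \<le> real n * M / s2"
    using solves_reg_gram_l1_le[OF assms(2,4,5) c2] by blast
  moreover have "0 \<le> \<delta>" using assms(3,6) by fastforce
  ultimately have weights: "\<delta> * (1 + (\<Sum>i<n. \<bar>c2 i\<bar>))\<^sup>2 \<le> \<delta> * (1 + real n * M / s2)\<^sup>2"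
    by (intro mult_left_mono power_mono) (auto simp: sum_nonneg)
  have "post_var k1 xs n s2 x \<le> ridge_objective k1 xs n s2 x c2"
    unfolding pv1 using ridge_objective_solution_le[OF assms(1,4) _ c1] assms(5) by simp
  also have "\<dots> \<le> post_var k2 xs n s2 x + \<delta> * (1 + (\<Sum>i<n. \<bar>c2 i\<bar>))\<^sup>2"
    unfolding pv2 using ridge_objective_diff_le[OF assms(6,3,4)] by (simp add: algebra_simps)
  finally show ?thesis using weights by linarith
qed

lemma post_var_abs_diff_le:
  assumes "is_kernel_on S k1" "is_kernel_on S k2" "x \<in> S" "\<forall>i<n. xs (Suc i) \<in> S" "0 < s2"
    and "\<forall>y\<in>S. \<forall>z\<in>S. \<bar>k1 y z - k2 y z\<bar> \<le> \<delta>" "\<forall>y\<in>S. k1 y y \<le> M" "\<forall>y\<in>S. k2 y y \<le> M"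
  shows "\<bar>post_var k1 xs n s2 x - post_var k2 xs n s2 x\<bar> \<le> \<delta> * (1 + real n * M / s2)\<^sup>2"
proof -
  have "\<forall>y\<in>S. \<forall>z\<in>S. \<bar>k2 y z - k1 y z\<bar> \<le> \<delta>" using assms(6) by (simp add: abs_minus_commute)
  from post_var_diff_le[OF assms(2,1,3-5) this assms(7)] post_var_diff_le[OF assms(1-6,8)]
  show ?thesis by linarith
qed

lemma post_sd_abs_diff_le:
  assumes "is_kernel_on S k1" "is_kernel_on S k2" "x \<in> S" "\<forall>i<n. xs (Suc i) \<in> S" "0 < s2"
    and "\<forall>y\<in>S. \<forall>z\<in>S. \<bar>k1 y z - k2 y z\<bar> \<le> \<delta>" "\<forall>y\<in>S. k1 y y \<le> M" "\<forall>y\<in>S. k2 y y \<le> M"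
  shows "\<bar>post_sd k1 xs n s2 x - post_sd k2 xs n s2 x\<bar> \<le> sqrt (\<delta> * (1 + real n * M / s2)\<^sup>2)"
  using abs_sqrt_diff_le[OF post_var_nonneg[OF assms(1,3-5)] post_var_nonneg[OF assms(2-5)]]
    real_sqrt_le_mono[OF post_var_abs_diff_le[OF assms]]
  unfolding post_sd_def by linarith

lemma sq_one_add_le:
  fixes n t :: nat and M s2 :: real
  assumes "n < t" "0 < s2" "2 * s2 \<le> M"
  shows "(1 + real n * M / s2)\<^sup>2 \<le> 1 + (M * real t / s2)\<^sup>2"
proof -
  define a where "a = real n * M / s2"
  have "2 \<le> M / s2" using assms(2,3) by (simp add: field_simps)
  moreover have "a + M / s2 = M * (real n + 1) / s2"
    unfolding a_def using assms(2) by (simp add: field_simps)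
  moreover have "M * (real n + 1) / s2 \<le> M * real t / s2"
    using assms by (intro divide_right_mono mult_left_mono) auto
  ultimately have "a + 2 \<le> M * real t / s2" by linarith
  moreover have "0 \<le> a" using assms unfolding a_def by simp
  ultimately have "(a + 2)\<^sup>2 \<le> (M * real t / s2)\<^sup>2" by (intro power_mono) auto
  then show ?thesis using \<open>0 \<le> a\<close> unfolding a_def[symmetric] by (simp add: power2_eq_square algebra_simps)
qed

theorem lemma9:
  fixes X :: "(real ^ 'd) set"
    and k :: "real ^ 'd \<Rightarrow> real ^ 'd \<Rightarrow> real"
    and kt :: "real ^ 'd \<Rightarrow> real ^ 'd \<Rightarrow> real"
    and grad :: "real ^ 'd \<Rightarrow> 'p::euclidean_space"
    and K0 :: real and L :: nat and eps :: real and s2 :: real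
    and xs :: "nat \<Rightarrow> real ^ 'd" and fb :: "nat \<Rightarrow> nat"
    and t :: nat and x :: "real ^ 'd"
  assumes "finite X" and "X \<subseteq> cball 0 1"
    and "is_kernel_on X k"
    and "\<forall>y\<in>X. \<forall>z\<in>X. k y z \<le> K0"
    and "\<forall>y z. kt y z = grad y \<bullet> grad z"
    and "\<forall>y\<in>X. \<forall>z\<in>X. \<bar>kt y z - k y z\<bar> \<le> (real L + 1) * eps"
    and "(real L + 1) * eps \<le> 1"
    and "0 < s2" and "s2 \<le> 1"
    and "\<forall>\<tau>\<ge>1. xs \<tau> \<in> X"
    and "\<forall>\<tau>\<ge>1. fb \<tau> \<le> \<tau> - 1"
    and "1 \<le> t" and "x \<in> X"
  shows "\<bar>post_sd k xs (fb t) s2 x - post_sd kt xs (fb t) s2 x\<bar>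
         \<le> sqrt ((real L + 1) * eps *
                 (1 + 4 * (max 1 K0)\<^sup>2 * (real t)\<^sup>2 / s2\<^sup>2))"
proof -
  define \<delta> where "\<delta> = (real L + 1) * eps"
  define Kh where "Kh = max 1 K0"
  define n where "n = fb t"
  have "kt = (\<lambda>y z. inner (grad y) (grad z))" using assms(5) by (simp add: fun_eq_iff)
  then have kt: "is_kernel_on X kt" by (simp add: is_kernel_on_inner)
  have obs: "\<forall>i<n. xs (Suc i) \<in> X" using assms(10) by simp
  have close: "\<forall>y\<in>X. \<forall>z\<in>X. \<bar>k y z - kt y z\<bar> \<le> \<delta>"
    using assms(6) unfolding \<delta>_def by (simp add: abs_minus_commute)
  have "\<forall>y\<in>X. k y y \<le> 2 * Kh" "\<forall>y\<in>X. kt y y \<le> 2 * Kh"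
    using assms(4,7) close unfolding Kh_def \<delta>_def by (force simp: abs_le_iff max_def)+
  then have "\<bar>post_sd k xs n s2 x - post_sd kt xs n s2 x\<bar> \<le> sqrt (\<delta> * (1 + real n * (2 * Kh) / s2)\<^sup>2)"
    using post_sd_abs_diff_le[OF assms(3) kt assms(13) obs assms(8) close] by blast
  also have "\<dots> \<le> sqrt (\<delta> * (1 + 4 * Kh\<^sup>2 * (real t)\<^sup>2 / s2\<^sup>2))"
  proof (intro real_sqrt_le_mono mult_left_mono)
    have "n < t" using assms(11,12) unfolding n_def by (metis diff_less le_less_trans less_one not_le)
    then show "(1 + real n * (2 * Kh) / s2)\<^sup>2 \<le> 1 + 4 * Kh\<^sup>2 * (real t)\<^sup>2 / s2\<^sup>2"
      using sq_one_add_le[of n t s2 "2 * Kh"] assms(8,9) unfolding Kh_def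
      by (simp add: power_divide power_mult_distrib)
    show "0 \<le> \<delta>" using close assms(13) by force
  qed
  finally show ?thesis unfolding \<delta>_def Kh_def n_def .
qed

end
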